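(* (1) If $L\subseteq A^*$ is accepted by a nondeterministic finite automaton having depth $m$, then ${\uparrow}L$ is $m$-PT while ${\uparrow}_<L$ and $\min(L)$ are $(m+1)$-PT. (2) The same conclusions hold if $L$ is accepted by a context-free grammar, with $m=\ell^N$, where $N$ is the number of nonterminal symbols and $\ell$ is the maximum length of the right-hand sides of the production rules.
   Context: The depth of an automaton is the maximum length of a simple (non-repeating) path from an initial state to some final state. $u\sqsubseteq v$ (subword) means $u=a_1\cdots a_n$ with letters $a_i$ and $v=v_0a_1v_1\cdots a_nv_n$; $u\sqsubset v$ means $u\sqsubseteq v$ and $u\ne v$. ${\uparrow}L=\{v~|~\exists u\in L: u\sqsubseteq v\}$, ${\uparrow}_<L=\{v~|~\exists u\in L:u\sqsubset v\}$, $\min(L)=\{u\in L~|~\forall v\in L: v\not\sqsubset u\}$. $u\sim_n v$ iff $u,v$ have the same subwords of length at most $n$; $L$ is $n$-PT if it is a union of $\sim_n$-classes. *)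

theory Defs
  imports Main "HOL-Library.Sublist"
begin

definition strict_subword :: "'a list \<Rightarrow> 'a list \<Rightarrow> bool" where
  "strict_subword u v \<longleftrightarrow> subseq u v \<and> u \<noteq> v"

definition up :: "'a set \<Rightarrow> 'a list set \<Rightarrow> 'a list set" where
  "up A L = {v \<in> lists A. \<exists>u\<in>L. subseq u v}"

definition up_strict :: "'a set \<Rightarrow> 'a list set \<Rightarrow> 'a list set" where
  "up_strict A L = {v \<in> lists A. \<exists>u\<in>L. strict_subword u v}"

definition min_lang :: "'a list set \<Rightarrow> 'a list set" where
  "min_lang L = {u \<in> L. \<forall>v\<in>L. \<not> strict_subword v u}"

definition subwords_upto :: "nat \<Rightarrow> 'a list \<Rightarrow> 'a list set" where
  "subwords_upto n w = {u. subseq u w \<and> length u \<le> n}"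

definition sim :: "nat \<Rightarrow> 'a list \<Rightarrow> 'a list \<Rightarrow> bool" where
  "sim n u v \<longleftrightarrow> subwords_upto n u = subwords_upto n v"

definition PT :: "nat \<Rightarrow> 'a set \<Rightarrow> 'a list set \<Rightarrow> bool" where
  "PT n A L \<longleftrightarrow> L \<subseteq> lists A \<and>
     (\<forall>u\<in>lists A. \<forall>v\<in>lists A. sim n u v \<longrightarrow> (u \<in> L \<longleftrightarrow> v \<in> L))"

record ('q, 'a) nfa =
  states :: "'q set"
  init :: "'q set"
  final :: "'q set"
  trans :: "('q \<times> 'a \<times> 'q) set"

definition nfa_over :: "'a set \<Rightarrow> ('q, 'a) nfa \<Rightarrow> bool" where
  "nfa_over A M \<longleftrightarrow> finite (states M) \<and> init M \<subseteq> states M \<and> final M \<subseteq> states M \<and>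
     trans M \<subseteq> states M \<times> A \<times> states M"

fun run :: "('q \<times> 'a \<times> 'q) set \<Rightarrow> 'q \<Rightarrow> 'a list \<Rightarrow> 'q \<Rightarrow> bool" where
  "run \<delta> q [] q' \<longleftrightarrow> q = q'"
| "run \<delta> q (a # w) q' \<longleftrightarrow> (\<exists>p. (q, a, p) \<in> \<delta> \<and> run \<delta> p w q')"

definition nfa_lang :: "('q, 'a) nfa \<Rightarrow> 'a list set" where
  "nfa_lang M = {w. \<exists>q\<in>init M. \<exists>q'\<in>final M. run (trans M) q w q'}"

definition simple_path :: "('q, 'a) nfa \<Rightarrow> 'q list \<Rightarrow> bool" where
  "simple_path M qs \<longleftrightarrow> qs \<noteq> [] \<and> distinct qs \<and> hd qs \<in> init M \<and> last qs \<in> final M \<and>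
     (\<forall>i. Suc i < length qs \<longrightarrow> (\<exists>a. (qs ! i, a, qs ! Suc i) \<in> trans M))"

definition nfa_depth :: "('q, 'a) nfa \<Rightarrow> nat" where
  "nfa_depth M = Max {length qs - 1 | qs. simple_path M qs}"

datatype ('n, 'a) symb = Nt 'n | Tm 'a

record ('n, 'a) cfg =
  nts :: "'n set"
  prods :: "('n \<times> ('n, 'a) symb list) set"
  start :: 'n

definition cfg_over :: "'a set \<Rightarrow> ('n, 'a) cfg \<Rightarrow> bool" where
  "cfg_over A G \<longleftrightarrow> finite (nts G) \<and> finite (prods G) \<and> start G \<in> nts G \<and>
     (\<forall>(X, \<alpha>)\<in>prods G. X \<in> nts G \<and>
        (\<forall>s\<in>set \<alpha>. case s of Nt Y \<Rightarrow> Y \<in> nts G | Tm a \<Rightarrow> a \<in> A))"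

definition cfg_step :: "('n, 'a) cfg \<Rightarrow> ('n, 'a) symb list \<Rightarrow> ('n, 'a) symb list \<Rightarrow> bool" where
  "cfg_step G u v \<longleftrightarrow> (\<exists>x X \<alpha> y. u = x @ [Nt X] @ y \<and> (X, \<alpha>) \<in> prods G \<and> v = x @ \<alpha> @ y)"

definition cfg_lang :: "('n, 'a) cfg \<Rightarrow> 'a list set" where
  "cfg_lang G = {w. (cfg_step G)\<^sup>*\<^sup>* [Nt (start G)] (map Tm w)}"

definition max_rhs :: "('n, 'a) cfg \<Rightarrow> nat" where
  "max_rhs G = Max ((\<lambda>(X, \<alpha>). length \<alpha>) ` prods G)"

end

theory Submission
  imports Defs
begin

text \<open>Every word of \<open>L\<close> has a subword in \<open>L\<close> of length at most \<open>m\<close>. For an automaton, cut the loops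
  out of an accepting run. For a grammar, induct on the number \<open>N\<close> of nonterminals: a derivation
  tree from \<open>X\<close> contains an \<open>X\<close>-subtree with no further \<open>X\<close> below its root; its yield is a
  subword, and each of the at most \<open>\<ell>\<close> children of its root derives with \<open>N - 1\<close> nonterminals.
  Hence membership in \<open>up A L\<close> depends only on the subwords of length \<open>\<le> m\<close>. For \<open>up_strict A L\<close>
  one must also see that the word is strictly longer than such a short subword \<open>u\<close>, and for
  \<open>min_lang L\<close> that it is no longer than \<open>u\<close>; subwords of length \<open>\<le> m + 1\<close> detect both.\<close>

section \<open>Short subwords and piecewise testability\<close>

lemma sim_sym: "sim n u v \<Longrightarrow> sim n v u"
  unfolding sim_def by simp

lemma subseq_if_sim: "sim n v v' \<Longrightarrow> subseq x v \<Longrightarrow> length x \<le> n \<Longrightarrow> subseq x v'"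
  unfolding sim_def subwords_upto_def by blast

lemma length_gt_if_sim:
  assumes "sim n v v'" and "k < n" and "k < length v"
  shows "k < length v'"
proof -
  have "subseq (take (Suc k) v) v" by (simp add: prefix_imp_subseq take_is_prefix)
  then have "subseq (take (Suc k) v) v'"
    using subseq_if_sim[OF assms(1)] assms(2) by simp
  then show ?thesis using list_emb_length assms(3) by fastforce
qed

lemma PT_if_sim_closed:
  assumes "L \<subseteq> lists A"
    and "\<And>u v. u \<in> L \<Longrightarrow> v \<in> lists A \<Longrightarrow> sim n u v \<Longrightarrow> v \<in> L"
  shows "PT n A L"
  unfolding PT_def using assms sim_sym by blast

definition short_subwords :: "nat \<Rightarrow> 'a list set \<Rightarrow> bool" where
  "short_subwords m L \<longleftrightarrow> (\<forall>w\<in>L. \<exists>u\<in>L. subseq u w \<and> length u \<le> m)"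

lemma PT_up:
  assumes "short_subwords m L"
  shows "PT m A (up A L)"
proof (rule PT_if_sim_closed)
  fix v v' assume v: "v \<in> up A L" and v': "v' \<in> lists A" and "sim m v v'"
  obtain u0 where "u0 \<in> L" "subseq u0 v" using v unfolding up_def by blast
  moreover obtain u where "u \<in> L" "subseq u u0" "length u \<le> m"
    using assms \<open>u0 \<in> L\<close> unfolding short_subwords_def by blast
  ultimately have "u \<in> L" "subseq u v'"
    using subseq_if_sim[OF \<open>sim m v v'\<close>] subseq_order.order_trans by blast+
  then show "v' \<in> up A L" using v' unfolding up_def by blast
qed (auto simp: up_def)

lemma PT_up_strict:
  assumes "short_subwords m L"
  shows "PT (m + 1) A (up_strict A L)"
proof (rule PT_if_sim_closed)
  fix v v' assume v: "v \<in> up_strict A L" and v': "v' \<in> lists A" and sim: "sim (m + 1) v v'"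
  obtain u0 where u0: "u0 \<in> L" "subseq u0 v" "u0 \<noteq> v"
    using v unfolding up_strict_def strict_subword_def by blast
  obtain u where u: "u \<in> L" "subseq u u0" "length u \<le> m"
    using assms u0(1) unfolding short_subwords_def by blast
  have "subseq u v" using u(2) u0(2) subseq_order.order_trans by blast
  then have "subseq u v'" using subseq_if_sim[OF sim] u(3) by simp
  have "length u0 < length v"
    using u0(2,3) list_emb_length subseq_same_length le_neq_implies_less by metis
  then have "length u < length v" using list_emb_length[OF u(2)] by simp
  then have "length u < length v'" using length_gt_if_sim[OF sim] u(3) by simp
  with \<open>subseq u v'\<close> show "v' \<in> up_strict A L"
    using u(1) v' unfolding up_strict_def strict_subword_def by auto
qed (auto simp: up_strict_def)

lemma PT_min_lang:
  assumes "L \<subseteq> lists A" and "short_subwords m L"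
  shows "PT (m + 1) A (min_lang L)"
proof (rule PT_if_sim_closed)
  fix v v' assume v: "v \<in> min_lang L" and sim: "sim (m + 1) v v'"
  obtain u where u: "u \<in> L" "subseq u v" "length u \<le> m"
    using v assms(2) unfolding min_lang_def short_subwords_def by blast
  then have "u = v" using v unfolding min_lang_def strict_subword_def by blast
  with u have short: "length v \<le> m" by simp
  have "subseq v v'" using subseq_if_sim[OF sim] short by simp
  moreover have "\<not> length v < length v'"
    using length_gt_if_sim[OF sim_sym[OF sim], of "length v"] short by auto
  ultimately have "v' = v" using subseq_same_length list_emb_length le_antisym not_less by metis
  then show "v' \<in> min_lang L" using v by simp
qed (use assms(1) in \<open>auto simp: min_lang_def\<close>)

section \<open>Automata\<close>

inductive lpath :: "('q \<times> 'a \<times> 'q) set \<Rightarrow> 'q list \<Rightarrow> 'a list \<Rightarrow> bool" for \<delta> where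
  lpath_single: "lpath \<delta> [q] []"
| lpath_Cons: "(q, a, hd qs) \<in> \<delta> \<Longrightarrow> lpath \<delta> qs u \<Longrightarrow> lpath \<delta> (q # qs) (a # u)"

lemma lpath_not_Nil: "lpath \<delta> qs u \<Longrightarrow> qs \<noteq> []"
  by (induction rule: lpath.induct) auto

lemma length_lpath: "lpath \<delta> qs u \<Longrightarrow> length qs = Suc (length u)"
  by (induction rule: lpath.induct) auto

lemma lpath_if_run: "run \<delta> q w q' \<Longrightarrow> \<exists>qs. lpath \<delta> qs w \<and> hd qs = q \<and> last qs = q'"
proof (induction w arbitrary: q)
  case Nil
  then show ?case by (auto intro: lpath_single)
next
  case (Cons a w)
  then obtain p where p: "(q, a, p) \<in> \<delta>" "run \<delta> p w q'" by auto
  moreover obtain qs where "lpath \<delta> qs w" "hd qs = p" "last qs = q'" using Cons.IH p(2) by blast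
  ultimately show ?case by (auto intro!: exI[of _ "q # qs"] lpath_Cons dest: lpath_not_Nil)
qed

lemma run_if_lpath: "lpath \<delta> qs w \<Longrightarrow> run \<delta> (hd qs) w (last qs)"
  by (induction rule: lpath.induct) (auto dest: lpath_not_Nil)

lemma lpath_suffix: "lpath \<delta> (xs @ ys) u \<Longrightarrow> ys \<noteq> [] \<Longrightarrow> lpath \<delta> ys (drop (length xs) u)"
proof (induction xs arbitrary: u)
  case (Cons x xs)
  from Cons.prems(1) show ?case by (cases rule: lpath.cases) (use Cons in auto)
qed simp

lemma lpath_nth_trans: "lpath \<delta> qs w \<Longrightarrow> Suc i < length qs \<Longrightarrow> \<exists>a. (qs ! i, a, qs ! Suc i) \<in> \<delta>"
proof (induction arbitrary: i rule: lpath.induct)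
  case (lpath_Cons q a qs u)
  then show ?case by (cases i) (auto simp: hd_conv_nth dest: lpath_not_Nil)
qed simp

lemma distinct_lpath_subseq:
  "lpath \<delta> qs w \<Longrightarrow>
     \<exists>qs' u. lpath \<delta> qs' u \<and> distinct qs' \<and> subseq u w \<and> hd qs' = hd qs \<and> last qs' = last qs"
proof (induction rule: lpath.induct)
  case (lpath_single q)
  then show ?case by (auto intro!: exI[of _ "[q]"] lpath.lpath_single)
next
  case (lpath_Cons q a qs u)
  then obtain qs' u' where IH: "lpath \<delta> qs' u'" "distinct qs'" "subseq u' u"
    "hd qs' = hd qs" "last qs' = last qs" by blast
  have ne: "qs \<noteq> []" "qs' \<noteq> []" using lpath_Cons.hyps(2) IH(1) by (auto dest: lpath_not_Nil)
  show ?case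
  proof (cases "q \<in> set qs'")
    case False
    with IH ne lpath_Cons.hyps(1) show ?thesis
      by (auto intro!: exI[of _ "q # qs'"] exI[of _ "a # u'"] lpath.lpath_Cons)
  next
    case True
    then obtain xs ys where qs': "qs' = xs @ q # ys" by (meson split_list)
    have "lpath \<delta> (q # ys) (drop (length xs) u')" using lpath_suffix IH(1) qs' by fastforce
    moreover have "subseq (drop (length xs) u') (a # u)"
      using IH(3) suffix_drop suffix_imp_subseq subseq_order.order_trans by blast
    ultimately show ?thesis using IH qs' ne by (intro exI[of _ "q # ys"] exI) auto
  qed
qed

lemma simple_path_states:
  assumes "nfa_over A M" and "simple_path M qs"
  shows "set qs \<subseteq> states M"
proof
  fix x assume "x \<in> set qs"
  then obtain i where i: "i < length qs" "qs ! i = x" by (auto simp: in_set_conv_nth)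
  show "x \<in> states M"
  proof (cases i)
    case 0
    then show ?thesis using assms i unfolding simple_path_def nfa_over_def by (auto simp: hd_conv_nth)
  next
    case (Suc j)
    then obtain a where "(qs ! j, a, qs ! i) \<in> trans M" using assms i unfolding simple_path_def by auto
    then show ?thesis using assms i unfolding nfa_over_def by auto
  qed
qed

lemma finite_simple_path_lengths:
  assumes "nfa_over A M"
  shows "finite {length qs - 1 | qs. simple_path M qs}"
proof -
  have "{qs. simple_path M qs} \<subseteq> {qs. set qs \<subseteq> states M \<and> distinct qs}"
    using simple_path_states[OF assms] unfolding simple_path_def by blast
  then have "finite {qs. simple_path M qs}"
    using finite_subset_distinct assms unfolding nfa_over_def by (metis finite_subset)
  then show ?thesis by (simp add: setcompr_eq_image)
qed

lemma run_in_lists: "run \<delta> q w q' \<Longrightarrow> \<delta> \<subseteq> S \<times> A \<times> S \<Longrightarrow> w \<in> lists A"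
  by (induction w arbitrary: q) auto

lemma nfa_lang_in_lists:
  assumes "nfa_over A M"
  shows "nfa_lang M \<subseteq> lists A"
proof
  fix w assume "w \<in> nfa_lang M"
  then obtain q q' where "run (trans M) q w q'" unfolding nfa_lang_def by blast
  then show "w \<in> lists A" by (rule run_in_lists[where S = "states M"]) (use assms in \<open>auto simp: nfa_over_def\<close>)
qed

lemma short_subwords_nfa_lang:
  assumes M: "nfa_over A M"
  shows "short_subwords (nfa_depth M) (nfa_lang M)"
  unfolding short_subwords_def
proof
  fix w assume "w \<in> nfa_lang M"
  then obtain q q' qs where q: "q \<in> init M" "q' \<in> final M"
    and qs: "lpath (trans M) qs w" "hd qs = q" "last qs = q'"
    unfolding nfa_lang_def by (blast dest: lpath_if_run)
  then obtain qs' u where u: "lpath (trans M) qs' u" "distinct qs'" "subseq u w"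
    "hd qs' = q" "last qs' = q'"
    using distinct_lpath_subseq by metis
  have "simple_path M qs'"
    unfolding simple_path_def using u q lpath_not_Nil lpath_nth_trans by blast
  then have "length qs' - 1 \<le> nfa_depth M"
    unfolding nfa_depth_def using finite_simple_path_lengths[OF M] by (auto intro: Max_ge)
  moreover have "u \<in> nfa_lang M"
    unfolding nfa_lang_def using run_if_lpath[OF u(1)] u(4,5) q by blast
  ultimately show "\<exists>u\<in>nfa_lang M. subseq u w \<and> length u \<le> nfa_depth M"
    using u(3) length_lpath[OF u(1)] by auto
qed

section \<open>Context-free grammars\<close>

text \<open>Derivation trees from the sentential form \<open>\<alpha>\<close> with yield \<open>w\<close> in which only nonterminals of
  \<open>V\<close> are expanded.\<close>
inductive yields :: "('n \<times> ('n, 'a) symb list) set \<Rightarrow> 'n set \<Rightarrow> ('n, 'a) symb list \<Rightarrow> 'a list \<Rightarrow> bool"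
  for P V where
  yields_Nil: "yields P V [] []"
| yields_Tm: "yields P V \<alpha> w \<Longrightarrow> yields P V (Tm a # \<alpha>) (a # w)"
| yields_Nt: "(Y, \<beta>) \<in> P \<Longrightarrow> Y \<in> V \<Longrightarrow> yields P V \<beta> u \<Longrightarrow> yields P V \<alpha> w \<Longrightarrow>
    yields P V (Nt Y # \<alpha>) (u @ w)"

lemma yields_NilD: "yields P V [] w \<Longrightarrow> w = []"
  by (cases rule: yields.cases) auto

lemma yields_single_Nt_iff:
  "yields P V [Nt Y] u \<longleftrightarrow> (\<exists>\<beta>. (Y, \<beta>) \<in> P \<and> Y \<in> V \<and> yields P V \<beta> u)"
proof
  assume "yields P V [Nt Y] u"
  then show "\<exists>\<beta>. (Y, \<beta>) \<in> P \<and> Y \<in> V \<and> yields P V \<beta> u"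
  proof (cases rule: yields.cases)
    case yields_Nt
    then show ?thesis using yields_NilD by fastforce
  qed
next
  assume "\<exists>\<beta>. (Y, \<beta>) \<in> P \<and> Y \<in> V \<and> yields P V \<beta> u"
  then show "yields P V [Nt Y] u" using yields_Nt[OF _ _ _ yields_Nil] by fastforce
qed

lemma yields_mono: "yields P V \<alpha> w \<Longrightarrow> V \<subseteq> W \<Longrightarrow> yields P W \<alpha> w"
  by (induction rule: yields.induct) (auto intro: yields.intros)

lemma yields_appendI: "yields P V \<alpha> u \<Longrightarrow> yields P V \<beta> w \<Longrightarrow> yields P V (\<alpha> @ \<beta>) (u @ w)"
  by (induction rule: yields.induct) (auto intro: yields.intros)

lemma yields_append_split:
  "yields P V (\<alpha> @ \<beta>) w \<Longrightarrow> \<exists>u v. w = u @ v \<and> yields P V \<alpha> u \<and> yields P V \<beta> v"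
proof (induction \<alpha> arbitrary: w)
  case Nil
  then show ?case using yields_Nil by fastforce
next
  case (Cons s \<alpha>)
  from Cons.prems show ?case
  proof (cases rule: yields.cases)
    case (yields_Tm \<alpha>' w' a)
    then obtain u v where "w' = u @ v" "yields P V \<alpha> u" "yields P V \<beta> v"
      using Cons.IH[of w'] yields_Tm by auto
    then have "w = (a # u) @ v" "yields P V (s # \<alpha>) (a # u)"
      using yields_Tm by (auto intro: yields.yields_Tm)
    then show ?thesis using \<open>yields P V \<beta> v\<close> by blast
  next
    case (yields_Nt Y \<gamma> u' \<alpha>' w')
    then obtain u v where "w' = u @ v" "yields P V \<alpha> u" "yields P V \<beta> v"
      using Cons.IH[of w'] yields_Nt by auto
    then have "w = (u' @ u) @ v" "yields P V (s # \<alpha>) (u' @ u)"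
      using yields_Nt by (auto intro: yields.yields_Nt)
    then show ?thesis using \<open>yields P V \<beta> v\<close> by blast
  qed simp
qed

lemma yields_map_Tm: "yields P V (map Tm w) w"
  by (induction w) (auto intro: yields.intros)

lemma yields_in_lists:
  "yields P V \<alpha> w \<Longrightarrow> (\<forall>(X, \<beta>)\<in>P. set \<beta> \<subseteq> range Nt \<union> Tm ` A) \<Longrightarrow>
    set \<alpha> \<subseteq> range Nt \<union> Tm ` A \<Longrightarrow> w \<in> lists A"
proof (induction rule: yields.induct)
  case (yields_Nt Y \<beta> u \<alpha> w)
  then have "set \<beta> \<subseteq> range Nt \<union> Tm ` A" by blast
  with yields_Nt show ?case by simp
qed auto


lemma yields_if_cfg_step:
  assumes G: "cfg_over A G" and step: "cfg_step G \<alpha> \<beta>" and \<beta>: "yields (prods G) (nts G) \<beta> w"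
  shows "yields (prods G) (nts G) \<alpha> w"
proof -
  obtain x X \<gamma> y where s: "\<alpha> = x @ [Nt X] @ y" "(X, \<gamma>) \<in> prods G" "\<beta> = x @ \<gamma> @ y"
    using step unfolding cfg_step_def by blast
  have "X \<in> nts G" using G s(2) unfolding cfg_over_def by auto
  obtain w1 w23 where w1: "w = w1 @ w23" "yields (prods G) (nts G) x w1"
      and w23: "yields (prods G) (nts G) (\<gamma> @ y) w23"
    using yields_append_split \<beta> unfolding s(3) by blast
  obtain w2 w3 where w2: "w23 = w2 @ w3" "yields (prods G) (nts G) \<gamma> w2"
      and w3: "yields (prods G) (nts G) y w3"
    using yields_append_split[OF w23] by blast
  have "yields (prods G) (nts G) [Nt X] w2"
    unfolding yields_single_Nt_iff using \<open>X \<in> nts G\<close> s(2) w2(2) by blast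
  then have "yields (prods G) (nts G) ([Nt X] @ y) (w2 @ w3)" using w3 by (rule yields_appendI)
  then have "yields (prods G) (nts G) (x @ [Nt X] @ y) (w1 @ w2 @ w3)"
    by (rule yields_appendI[OF w1(2)])
  then show ?thesis using s(1) w1(1) w2(1) by simp
qed

lemma cfg_step_append: "cfg_step G u v \<Longrightarrow> cfg_step G (x @ u @ y) (x @ v @ y)"
  unfolding cfg_step_def by (metis append.assoc)

lemma cfg_steps_append: "(cfg_step G)\<^sup>*\<^sup>* u v \<Longrightarrow> (cfg_step G)\<^sup>*\<^sup>* (x @ u @ y) (x @ v @ y)"
  by (induction rule: rtranclp_induct) (auto intro: rtranclp.rtrancl_into_rtrancl cfg_step_append)

lemma cfg_steps_if_yields: "yields (prods G) V \<alpha> w \<Longrightarrow> (cfg_step G)\<^sup>*\<^sup>* \<alpha> (map Tm w)"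
proof (induction rule: yields.induct)
  case (yields_Tm \<alpha> w a)
  then show ?case using cfg_steps_append[of G \<alpha> "map Tm w" "[Tm a]" "[]"] by simp
next
  case (yields_Nt Y \<beta> u \<alpha> w)
  have "cfg_step G (Nt Y # \<alpha>) (\<beta> @ \<alpha>)"
    unfolding cfg_step_def using yields_Nt(1) by (intro exI[of _ "[]"]) auto
  also have "(cfg_step G)\<^sup>*\<^sup>* (\<beta> @ \<alpha>) (map Tm u @ \<alpha>)"
    using cfg_steps_append[OF yields_Nt.IH(1), of "[]" \<alpha>] by simp
  also have "(cfg_step G)\<^sup>*\<^sup>* (map Tm u @ \<alpha>) (map Tm u @ map Tm w)"
    using cfg_steps_append[OF yields_Nt.IH(2), of "map Tm u" "[]"] by simp
  finally show ?case by simp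
qed simp

lemma cfg_lang_eq_yields:
  assumes "cfg_over A G"
  shows "cfg_lang G = {w. yields (prods G) (nts G) [Nt (start G)] w}"
proof (intro set_eqI iffI; simp)
  fix w assume "w \<in> cfg_lang G"
  then have "(cfg_step G)\<^sup>*\<^sup>* [Nt (start G)] (map Tm w)" unfolding cfg_lang_def by simp
  then show "yields (prods G) (nts G) [Nt (start G)] w"
    by (induction rule: converse_rtranclp_induct)
      (auto intro: yields_map_Tm yields_if_cfg_step[OF assms])
next
  fix w assume "yields (prods G) (nts G) [Nt (start G)] w"
  then show "w \<in> cfg_lang G" unfolding cfg_lang_def by (simp add: cfg_steps_if_yields)
qed

lemma yields_Diff_or_subtree:
  "yields P V \<alpha> w \<Longrightarrow>
     yields P (V - {X}) \<alpha> w \<or> (\<exists>w' \<beta>. subseq w' w \<and> (X, \<beta>) \<in> P \<and> yields P (V - {X}) \<beta> w')"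
proof (induction rule: yields.induct)
  case (yields_Nt Y \<beta> u \<alpha> w)
  show ?case
  proof (cases "yields P (V - {X}) \<beta> u \<and> yields P (V - {X}) \<alpha> w")
    case True
    then show ?thesis using yields_Nt(1,2) by (cases "Y = X") (auto intro: yields.yields_Nt)
  next
    case False
    then show ?thesis using yields_Nt.IH subseq_order.order_trans by blast
  qed
qed (auto intro: yields.intros)

lemma yields_short_subword_form:
  assumes "yields P W \<beta> w"
    and short: "\<And>Y w. yields P W [Nt Y] w \<Longrightarrow> \<exists>u. subseq u w \<and> yields P W [Nt Y] u \<and> length u \<le> K"
  shows "\<exists>u. subseq u w \<and> yields P W \<beta> u \<and> length u \<le> length \<beta> * max 1 K"
  using assms(1)
proof (induction rule: yields.induct)
  case (yields_Tm \<alpha> w a)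
  then obtain u where "subseq u w" "yields P W \<alpha> u" "length u \<le> length \<alpha> * max 1 K"
    by (elim exE conjE)
  then show ?case by (intro exI[of _ "a # u"]) (auto intro: yields.yields_Tm)
next
  case (yields_Nt Y \<beta> u \<alpha> w)
  obtain u2 where u2: "subseq u2 w" "yields P W \<alpha> u2" "length u2 \<le> length \<alpha> * max 1 K"
    using yields_Nt.IH(2) by blast
  have "yields P W [Nt Y] u" unfolding yields_single_Nt_iff using yields_Nt(1-3) by blast
  then obtain u1 where u1: "subseq u1 u" "yields P W [Nt Y] u1" "length u1 \<le> K"
    using short by blast
  then have "yields P W (Nt Y # \<alpha>) (u1 @ u2)"
    using yields_appendI[OF _ u2(2), of "[Nt Y]"] by simp
  moreover have "subseq (u1 @ u2) (u @ w)" using u1(1) u2(1) list_emb_append_mono by blast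
  ultimately show ?case using u1(3) u2(3) by (intro exI[of _ "u1 @ u2"]) auto
qed (auto intro: yields.intros)

lemma yields_short_subword:
  assumes "finite V" and "\<And>Y \<gamma>. (Y, \<gamma>) \<in> P \<Longrightarrow> length \<gamma> \<le> l"
    and "yields P V [Nt X] w"
  shows "\<exists>u. subseq u w \<and> yields P V [Nt X] u \<and> length u \<le> l ^ card V"
  using assms(1,3)
proof (induction "card V" arbitrary: V X w rule: less_induct)
  case less
  have X: "X \<in> V" using less.prems(2) unfolding yields_single_Nt_iff by blast
  have "\<not> yields P (V - {X}) [Nt X] w" unfolding yields_single_Nt_iff by blast
  then obtain w' \<beta> where \<beta>: "subseq w' w" "(X, \<beta>) \<in> P" "yields P (V - {X}) \<beta> w'"
    using yields_Diff_or_subtree[OF less.prems(2), of X] by blast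
  have card: "card V = Suc (card (V - {X}))" using card_Suc_Diff1[OF less.prems(1) X] by simp
  have "card (V - {X}) < card V" "finite (V - {X})" using card less.prems(1) by auto
  note IH = less.hyps[OF this]
  obtain u where u: "subseq u w'" "yields P (V - {X}) \<beta> u"
      "length u \<le> length \<beta> * max 1 (l ^ card (V - {X}))"
    using yields_short_subword_form[OF \<beta>(3) IH] by blast
  have "yields P V [Nt X] u"
    unfolding yields_single_Nt_iff using X \<beta>(2) yields_mono[OF u(2)] by blast
  moreover have "subseq u w" using u(1) \<beta>(1) subseq_order.order_trans by blast
  moreover have "length u \<le> l ^ card V"
  proof (cases "l = 0")
    case True
    then show ?thesis using assms(2)[OF \<beta>(2)] u(3) by simp
  next
    case False
    then have "length u \<le> length \<beta> * l ^ card (V - {X})" using u(3) by (simp add: max_def)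
    also have "\<dots> \<le> l ^ card V" using assms(2)[OF \<beta>(2)] card by simp
    finally show ?thesis .
  qed
  ultimately show ?case by blast
qed

lemma cfg_lang_in_lists:
  assumes G: "cfg_over A G"
  shows "cfg_lang G \<subseteq> lists A"
proof -
  have symbols: "set \<alpha> \<subseteq> range Nt \<union> Tm ` A" if "(X, \<alpha>) \<in> prods G" for X \<alpha>
    using G that unfolding cfg_over_def by (fastforce split: symb.splits)
  show ?thesis
  proof
    fix w assume "w \<in> cfg_lang G"
    then have "yields (prods G) (nts G) [Nt (start G)] w" unfolding cfg_lang_eq_yields[OF G] by simp
    then show "w \<in> lists A" by (rule yields_in_lists) (use symbols in auto)
  qed
qed

lemma short_subwords_cfg_lang:
  assumes G: "cfg_over A G"
  shows "short_subwords (max_rhs G ^ card (nts G)) (cfg_lang G)"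
  unfolding short_subwords_def
proof
  fix w assume "w \<in> cfg_lang G"
  then have w: "yields (prods G) (nts G) [Nt (start G)] w" unfolding cfg_lang_eq_yields[OF G] by simp
  have fin: "finite (nts G)" using G unfolding cfg_over_def by simp
  have len: "\<And>X \<beta>. (X, \<beta>) \<in> prods G \<Longrightarrow> length \<beta> \<le> max_rhs G"
    unfolding max_rhs_def using G unfolding cfg_over_def
    by (metis (mono_tags, lifting) Max_ge case_prod_conv finite_imageI image_eqI)
  have "\<exists>u. subseq u w \<and> yields (prods G) (nts G) [Nt (start G)] u \<and>
      length u \<le> max_rhs G ^ card (nts G)"
    by (rule yields_short_subword[OF fin len w])
  then obtain u where "subseq u w" "yields (prods G) (nts G) [Nt (start G)] u"
      "length u \<le> max_rhs G ^ card (nts G)"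
    by (elim exE conjE)
  then show "\<exists>u\<in>cfg_lang G. subseq u w \<and> length u \<le> max_rhs G ^ card (nts G)"
    unfolding cfg_lang_eq_yields[OF G] by blast
qed

lemma PT_closures:
  assumes "L \<subseteq> lists A" and "short_subwords m L"
  shows "PT m A (up A L) \<and> PT (m + 1) A (up_strict A L) \<and> PT (m + 1) A (min_lang L)"
  using PT_up[OF assms(2)] PT_up_strict[OF assms(2)] PT_min_lang[OF assms] by blast

theorem theorem10:
  fixes A :: "'a set"
  assumes "finite A"
  shows "(\<forall>M :: ('q, 'a) nfa. nfa_over A M \<longrightarrow>
            (let L = nfa_lang M; m = nfa_depth M in
               PT m A (up A L) \<and> PT (m + 1) A (up_strict A L) \<and> PT (m + 1) A (min_lang L)))
       \<and> (\<forall>G :: ('n, 'a) cfg. cfg_over A G \<longrightarrow>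
            (let L = cfg_lang G; m = max_rhs G ^ card (nts G) in
               PT m A (up A L) \<and> PT (m + 1) A (up_strict A L) \<and> PT (m + 1) A (min_lang L)))"
  unfolding Let_def
proof (rule conjI; intro allI impI)
  fix M :: "('q, 'a) nfa" assume M: "nfa_over A M"
  show "PT (nfa_depth M) A (up A (nfa_lang M)) \<and>
      PT (nfa_depth M + 1) A (up_strict A (nfa_lang M)) \<and> PT (nfa_depth M + 1) A (min_lang (nfa_lang M))"
    by (rule PT_closures[OF nfa_lang_in_lists[OF M] short_subwords_nfa_lang[OF M]])
next
  fix G :: "('n, 'a) cfg" assume G: "cfg_over A G"
  show "PT (max_rhs G ^ card (nts G)) A (up A (cfg_lang G)) \<and>
      PT (max_rhs G ^ card (nts G) + 1) A (up_strict A (cfg_lang G)) \<and>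
      PT (max_rhs G ^ card (nts G) + 1) A (min_lang (cfg_lang G))"
    by (rule PT_closures[OF cfg_lang_in_lists[OF G] short_subwords_cfg_lang[OF G]])
qed

end
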